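(* Let $k\le l$ be positive integers with $\gcd(k,l)=1$, let $n\ge 1$ and $m\ge 0$ be integers, and write $m=qn+r$ with integers $q\ge0$, $0\le r<n$. Then there exists $A\in\mathcal D^{k,l}(m,n)$ such that ${\rm tdet}(A)\le nk(q+1)$.
   Context: $\mathcal D^{k,l}(m,n)$ denotes the set of all $nk\times nl$ matrices with nonnegative integer entries all of whose row sums equal $ml$ and all of whose column sums equal $mk$. For an $s\times t$ matrix $A=(a_{ij})$ with $s\le t$, a transversal of $A$ is a set of entries $T=\{a_{1i_1},\dots,a_{si_s}\}$ with $i_1,\dots,i_s\in\{1,\dots,t\}$ pairwise distinct, and $|T|=a_{1i_1}+\cdots+a_{si_s}$; if $s>t$, the transversals of $A$ are those of its transpose. The tropical determinant is ${\rm tdet}(A)=\max_T|T|$ over all transversals $T$ of $A$. *)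

theory Defs
  imports Main
begin

text \<open>Matrices are represented as functions nat => nat => nat together with explicit
dimensions s (rows, indices 0..<s) and t (columns, indices 0..<t).\<close>

definition in_D :: "nat \<Rightarrow> nat \<Rightarrow> nat \<Rightarrow> nat \<Rightarrow> (nat \<Rightarrow> nat \<Rightarrow> nat) \<Rightarrow> bool" where
  "in_D k l m n A \<longleftrightarrow>
     (\<forall>i<n*k. (\<Sum>j<n*l. A i j) = m*l) \<and>
     (\<forall>j<n*l. (\<Sum>i<n*k. A i j) = m*k)"

definition transversal_weights_le :: "nat \<Rightarrow> nat \<Rightarrow> (nat \<Rightarrow> nat \<Rightarrow> nat) \<Rightarrow> nat set" where
  "transversal_weights_le s t A =
     {(\<Sum>i<s. A i (f i)) | f. f ` {..<s} \<subseteq> {..<t} \<and> inj_on f {..<s}}"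

definition transversal_weights :: "nat \<Rightarrow> nat \<Rightarrow> (nat \<Rightarrow> nat \<Rightarrow> nat) \<Rightarrow> nat set" where
  "transversal_weights s t A =
     (if s \<le> t then transversal_weights_le s t A
      else transversal_weights_le t s (\<lambda>i j. A j i))"

definition tdet :: "nat \<Rightarrow> nat \<Rightarrow> (nat \<Rightarrow> nat \<Rightarrow> nat) \<Rightarrow> nat" where
  "tdet s t A = Max (transversal_weights s t A)"

end

theory Submission imports Defs begin

text \<open>Split the $nk \times nl$ matrix into an $n \times n$ array of $k \times l$ blocks and fill
block $(a, b)$ with the constant $q + 1$ if $(a + b) \bmod n < r$ and with $q$ otherwise. Every
block row and every block column is a cyclic shift of the same pattern, so it contains exactly
$r$ blocks of value $q + 1$; hence all row sums are $l(nq + r) = lm$ and all column sums are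
$km$. Since no entry exceeds $q + 1$, a transversal, which has $nk$ entries, weighs at most
$nk(q + 1)$.\<close>

lemma sum_div_blocks:
  "(\<Sum>j<n * l. g (j div l)) = of_nat l * (\<Sum>b<n. g b :: 'a :: comm_semiring_1)"
proof (induction n)
  case 0
  then show ?case by simp
next
  case (Suc n)
  have "(\<Sum>j<Suc n * l. g (j div l))
        = (\<Sum>j\<in>{0..<n * l}. g (j div l)) + (\<Sum>j\<in>{n * l..<n * l + l}. g (j div l))"
    by (subst sum.atLeastLessThan_concat) (auto simp: lessThan_atLeast0 add.commute)
  also have "(\<Sum>j\<in>{n * l..<n * l + l}. g (j div l)) = (\<Sum>j\<in>{n * l..<n * l + l}. g n)"
    by (rule sum.cong) (auto intro!: arg_cong[where f = g] div_nat_eqI simp: algebra_simps)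
  finally show ?case
    using Suc by (simp add: lessThan_atLeast0 algebra_simps)
qed

lemma inj_on_add_mod: "inj_on (\<lambda>b. (a + b) mod n) {..<n :: nat}"
proof (rule inj_onI)
  fix b c
  assume "b \<in> {..<n}" "c \<in> {..<n}" and "(a + b) mod n = (a + c) mod n"
  from \<open>(a + b) mod n = (a + c) mod n\<close> have "b mod n = c mod n"
    by (simp add: add.assoc nat_mod_eq_iff)
  with \<open>b \<in> {..<n}\<close> \<open>c \<in> {..<n}\<close> show "b = c"
    by simp
qed

lemma sum_add_mod:
  "(\<Sum>b<n. g ((a + b) mod n)) = (\<Sum>b<n :: nat. g b)"
proof -
  have "(\<lambda>b. (a + b) mod n) ` {..<n} = {..<n}"
    by (rule endo_inj_surj) (auto intro: inj_on_add_mod)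
  then show ?thesis
    using sum.reindex[OF inj_on_add_mod, of g a n] by (simp add: comp_def)
qed

lemma count_add_mod_less:
  assumes "r \<le> n"
  shows "(\<Sum>b<n. if (a + b) mod n < r then 1 else 0) = (r :: nat)"
proof -
  have "(\<Sum>b<n. if (a + b) mod n < r then 1 else 0) = (\<Sum>c<n. if c < r then 1 else 0 :: nat)"
    by (rule sum_add_mod)
  also have "\<dots> = card ({..<n} \<inter> {c. c < r})"
    by (simp add: sum.If_cases)
  also have "{..<n} \<inter> {c. c < r} = {..<r}"
    using assms by auto
  finally show ?thesis by simp
qed

definition block_circulant :: "nat \<Rightarrow> nat \<Rightarrow> nat \<Rightarrow> nat \<Rightarrow> nat \<Rightarrow> nat \<Rightarrow> nat \<Rightarrow> nat" where
  "block_circulant k l n q r i j = q + (if (i div k + j div l) mod n < r then 1 else 0)"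

lemma block_circulant_le: "block_circulant k l n q r i j \<le> q + 1"
  by (simp add: block_circulant_def)

lemma block_circulant_in_D:
  assumes "r \<le> n"
  shows "in_D k l (q * n + r) n (block_circulant k l n q r)"
proof -
  have "(\<Sum>j<n * l. block_circulant k l n q r i j) = (q * n + r) * l" for i
  proof -
    have "(\<Sum>j<n * l. block_circulant k l n q r i j)
          = n * l * q + (\<Sum>j<n * l. (\<lambda>b. if (i div k + b) mod n < r then 1 else 0) (j div l))"
      by (simp add: block_circulant_def sum.distrib)
    also have "\<dots> = n * l * q + l * r"
      using sum_div_blocks[where g = "\<lambda>b. if (i div k + b) mod n < r then 1 else 0 :: nat" and n = n and l = l]
        count_add_mod_less[OF assms, of "i div k"] by simp
    finally show ?thesis by (simp add: algebra_simps)
  qed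
  moreover have "(\<Sum>i<n * k. block_circulant k l n q r i j) = (q * n + r) * k" for j
  proof -
    have "(\<Sum>i<n * k. block_circulant k l n q r i j)
          = n * k * q + (\<Sum>i<n * k. (\<lambda>a. if (j div l + a) mod n < r then 1 else 0) (i div k))"
      by (simp add: block_circulant_def sum.distrib add.commute)
    also have "\<dots> = n * k * q + k * r"
      using sum_div_blocks[where g = "\<lambda>a. if (j div l + a) mod n < r then 1 else 0 :: nat" and n = n and l = k]
        count_add_mod_less[OF assms, of "j div l"] by simp
    finally show ?thesis by (simp add: algebra_simps)
  qed
  ultimately show ?thesis
    unfolding in_D_def by blast
qed

lemma transversal_weights_le_bounded:
  assumes "\<And>i j. i < s \<Longrightarrow> j < t \<Longrightarrow> A i j \<le> c"
    and "w \<in> transversal_weights_le s t A"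
  shows "w \<le> s * c"
proof -
  obtain f where f: "f ` {..<s} \<subseteq> {..<t}" and w: "w = (\<Sum>i<s. A i (f i))"
    using assms(2) unfolding transversal_weights_le_def by blast
  have "(\<Sum>i<s. A i (f i)) \<le> (\<Sum>i<s. c)"
    using f by (intro sum_mono assms(1)) auto
  then show ?thesis
    using w by simp
qed

lemma transversal_weights_le_nonempty:
  "s \<le> t \<Longrightarrow> transversal_weights_le s t A \<noteq> {}"
  unfolding transversal_weights_le_def by (auto intro!: exI[of _ "\<lambda>i. i"])

lemma tdet_le_entry_bound:
  assumes "\<And>i j. i < s \<Longrightarrow> j < t \<Longrightarrow> A i j \<le> c"
  shows "tdet s t A \<le> min s t * c"
proof -
  have max_le: "Max (transversal_weights_le s' t' B) \<le> s' * c"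
    if "s' \<le> t'" and "\<And>i j. i < s' \<Longrightarrow> j < t' \<Longrightarrow> B i j \<le> c" for s' t' B
  proof -
    have "\<forall>w \<in> transversal_weights_le s' t' B. w \<le> s' * c"
      using transversal_weights_le_bounded[where A = B, OF that(2)] by blast
    then have "finite (transversal_weights_le s' t' B)"
      by (meson finite_atMost finite_subset atMost_iff subsetI)
    then show ?thesis
      using transversal_weights_le_nonempty[OF that(1)] \<open>\<forall>w \<in> _. w \<le> s' * c\<close> by simp
  qed
  show ?thesis
  proof (cases "s \<le> t")
    case True
    then show ?thesis
      using max_le[of s t A] assms by (simp add: tdet_def transversal_weights_def)
  next
    case False
    then show ?thesis
      using max_le[of t s "\<lambda>i j. A j i"] assms by (simp add: tdet_def transversal_weights_def)
  qed
qed

theorem proposition3p1: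
  fixes k l n m q r :: nat
  assumes "0 < k" and "k \<le> l" and "gcd k l = 1"
    and "1 \<le> n" and "m = q * n + r" and "r < n"
  shows "\<exists>A. in_D k l m n A \<and> tdet (n*k) (n*l) A \<le> n * k * (q + 1)"
proof (intro exI conjI)
  show "in_D k l m n (block_circulant k l n q r)"
    using block_circulant_in_D \<open>m = q * n + r\<close> \<open>r < n\<close> by simp
  have "tdet (n*k) (n*l) (block_circulant k l n q r) \<le> min (n*k) (n*l) * (q + 1)"
    by (rule tdet_le_entry_bound) (rule block_circulant_le)
  then show "tdet (n*k) (n*l) (block_circulant k l n q r) \<le> n * k * (q + 1)"
    using \<open>k \<le> l\<close> by (simp add: min_def)
qed

end
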